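(* Let $X$ and $Y$ be Banach spaces and $E=X\oplus_\infty Y$. If $x\in S_X$ is a ccs Daugavet point of $X$, then $(x,y)$ is a ccs Daugavet point of $E$ for every $y\in B_Y$.
   Context: $X\oplus_\infty Y$ is $X\times Y$ with norm $\|(x,y)\|=\max\{\|x\|,\|y\|\}$. A slice of the unit ball $B_Z$ of a Banach space $Z$ is a non-empty set $\{z\in B_Z:\operatorname{Re}z^*(z)>\|z^*\|-\delta\}$ with $z^*\in Z^*$, $\delta>0$; a ccs of $B_Z$ is $\sum_{i=1}^n\lambda_iS_i$ with $\lambda_i\in(0,1]$, $\sum\lambda_i=1$, $S_i$ slices. $z\in S_Z$ is a ccs Daugavet point if $\sup_{w\in C}\|z-w\|=2$ for every ccs $C$ of $B_Z$. *)

theory Defs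
  imports "HOL-Analysis.Analysis"
begin

datatype ('a, 'b) linf = LInf 'a 'b

fun linf_fst where "linf_fst (LInf a b) = a"
fun linf_snd where "linf_snd (LInf a b) = b"

lemma linf_eqI: "linf_fst p = linf_fst q \<Longrightarrow> linf_snd p = linf_snd q \<Longrightarrow> p = q"
  by (cases p; cases q) auto

instantiation linf :: (real_vector, real_vector) real_vector
begin
definition "0 = LInf 0 0"
definition "p + q = LInf (linf_fst p + linf_fst q) (linf_snd p + linf_snd q)"
definition "p - q = LInf (linf_fst p - linf_fst q) (linf_snd p - linf_snd q)"
definition "- p = LInf (- linf_fst p) (- linf_snd p)"
definition "scaleR r p = LInf (scaleR r (linf_fst p)) (scaleR r (linf_snd p))"
instance
  by standard (auto intro!: linf_eqI simp: zero_linf_def plus_linf_def minus_linf_def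
      uminus_linf_def scaleR_linf_def algebra_simps)
end

instantiation linf :: (real_normed_vector, real_normed_vector) real_normed_vector
begin
definition norm_linf :: "('a, 'b) linf \<Rightarrow> real" where
  "norm_linf p = max (norm (linf_fst p)) (norm (linf_snd p))"
definition sgn_linf :: "('a, 'b) linf \<Rightarrow> ('a, 'b) linf" where
  "sgn_linf p = inverse (norm p) *\<^sub>R p"
definition dist_linf :: "('a, 'b) linf \<Rightarrow> ('a, 'b) linf \<Rightarrow> real" where
  "dist_linf p q = norm (p - q)"
definition uniformity_linf :: "(('a, 'b) linf \<times> ('a, 'b) linf) filter" where
  "uniformity_linf = (INF e\<in>{0<..}. principal {(x, y). dist x y < e})"
definition open_linf :: "('a, 'b) linf set \<Rightarrow> bool" where
  "open_linf U = (\<forall>x\<in>U. \<forall>\<^sub>F (x', y) in uniformity. x' = x \<longrightarrow> y \<in> U)"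
instance
proof
  fix p q :: "('a, 'b) linf" and r :: real
  show "(norm p = 0) = (p = 0)"
    by (cases p) (auto simp: norm_linf_def zero_linf_def max_def)
  show "norm (p + q) \<le> norm p + norm q"
    unfolding norm_linf_def plus_linf_def
    using norm_triangle_ineq[of "linf_fst p" "linf_fst q"]
          norm_triangle_ineq[of "linf_snd p" "linf_snd q"]
    by simp linarith
  show "norm (r *\<^sub>R p) = \<bar>r\<bar> * norm p"
    by (simp add: norm_linf_def scaleR_linf_def max_mult_distrib_left)
qed (auto simp: sgn_linf_def dist_linf_def uniformity_linf_def open_linf_def)
end

lemma norm_LInf: "norm (LInf a b) = max (norm a) (norm b)"
  by (simp add: norm_linf_def)

definition slice :: "('a::real_normed_vector \<Rightarrow> real) \<Rightarrow> real \<Rightarrow> 'a set" where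
  "slice f \<delta> = {z. norm z \<le> 1 \<and> f z > onorm f - \<delta>}"

definition is_slice :: "'a::real_normed_vector set \<Rightarrow> bool" where
  "is_slice S \<longleftrightarrow> (\<exists>f \<delta>. bounded_linear f \<and> \<delta> > 0 \<and> S = slice f \<delta> \<and> S \<noteq> {})"

text \<open>Convex combination of slices: sum_{i<n} lambda_i S_i (Minkowski sum).\<close>
definition is_ccs :: "'a::real_normed_vector set \<Rightarrow> bool" where
  "is_ccs C \<longleftrightarrow> (\<exists>n::nat. \<exists>lam :: nat \<Rightarrow> real. \<exists>S :: nat \<Rightarrow> 'a set.
      n \<ge> 1 \<and> (\<forall>i<n. 0 < lam i \<and> lam i \<le> 1 \<and> is_slice (S i)) \<and> (\<Sum>i<n. lam i) = 1 \<and>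
      C = {(\<Sum>i<n. lam i *\<^sub>R z i) | z. \<forall>i<n. z i \<in> S i})"

definition ccs_daugavet_point :: "'a::real_normed_vector \<Rightarrow> bool" where
  "ccs_daugavet_point z \<longleftrightarrow> norm z = 1 \<and>
     (\<forall>C. is_ccs C \<longrightarrow> (SUP w\<in>C. norm (z - w)) = 2)"

end

theory Submission
  imports Defs
begin

text \<open>A slice of the unit ball of \<open>X \<oplus>\<^sub>\<infinity> Y\<close> given by \<open>F\<close> splits as \<open>F (a, b) = f a + g b\<close>, and
  \<open>\<parallel>F\<parallel> \<le> \<parallel>f\<parallel> + \<parallel>g\<parallel>\<close>; choosing \<open>b \<in> B\<^sub>Y\<close> almost norming \<open>g\<close>, the whole set \<open>T \<times> {b}\<close> lies in the
  slice for a slice \<open>T\<close> of \<open>B\<^sub>X\<close> defined by \<open>f\<close>. Hence every ccs of \<open>B\<^sub>E\<close> projects onto a set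
  containing a ccs of \<open>B\<^sub>X\<close>, and since the first coordinate of \<open>(x, y) - w\<close> is \<open>x - w\<^sub>1\<close>, the
  distances from \<open>(x, y)\<close> to the ccs dominate those from \<open>x\<close> to the projected ccs, whose
  supremum is already 2.\<close>

lemma slice_nonempty:
  fixes f :: "'a::real_normed_vector \<Rightarrow> real"
  assumes f: "bounded_linear f" and \<delta>: "\<delta> > 0"
  shows "slice f \<delta> \<noteq> {}"
proof -
  interpret bounded_linear f by fact
  have bdd: "bdd_above (range (\<lambda>x. norm (f x) / norm x))"
    using le_onorm[OF f] unfolding bdd_above_def by fast
  have "onorm f - \<delta> < (SUP x. norm (f x) / norm x)"
    using \<delta> unfolding onorm_def by simp
  then obtain x where x: "onorm f - \<delta> < norm (f x) / norm x"
    using less_cSUP_iff[OF _ bdd] by auto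
  show ?thesis
  proof (cases "x = 0")
    case True
    then have "0 \<in> slice f \<delta>"
      using x by (simp add: slice_def zero)
    then show ?thesis by blast
  next
    case False
    define u where "u = (if f x \<ge> 0 then 1 else -1) *\<^sub>R (x /\<^sub>R norm x)"
    have "norm u = 1" and "f u = norm (f x) / norm x"
      using False by (auto simp: u_def scale neg divide_inverse_commute)
    then have "u \<in> slice f \<delta>"
      using x by (simp add: slice_def)
    then show ?thesis by blast
  qed
qed

lemma is_ccsE:
  fixes C :: "'a::real_normed_vector set"
  assumes "is_ccs C"
  obtains n :: nat and lam :: "nat \<Rightarrow> real" and S :: "nat \<Rightarrow> 'a set" where
    "n \<ge> 1" "\<forall>i<n. 0 < lam i \<and> lam i \<le> 1 \<and> is_slice (S i)" "(\<Sum>i<n. lam i) = 1"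
    "C = {(\<Sum>i<n. lam i *\<^sub>R z i) | z. \<forall>i<n. z i \<in> S i}"
  using assms unfolding is_ccs_def by blast

lemma norm_le_one_of_mem_ccs:
  fixes C :: "'a::real_normed_vector set"
  assumes "is_ccs C" "w \<in> C"
  shows "norm w \<le> 1"
proof -
  obtain n :: nat and lam S where
    "n \<ge> 1" and lam: "\<forall>i<n. 0 < lam i \<and> lam i \<le> 1 \<and> is_slice (S i)" "(\<Sum>i<n. lam i) = 1" and
    C: "C = {(\<Sum>i<n. lam i *\<^sub>R z i) | z. \<forall>i<n. z i \<in> S i}"
    by (rule is_ccsE[OF assms(1)])
  obtain z where z: "\<forall>i<n. z i \<in> S i" "w = (\<Sum>i<n. lam i *\<^sub>R z i)"
    using assms(2) C by blast
  have "norm w \<le> (\<Sum>i<n. norm (lam i *\<^sub>R z i))"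
    unfolding z(2) by (rule norm_sum)
  also have "\<dots> \<le> (\<Sum>i<n. lam i)"
    using lam(1) z(1) unfolding is_slice_def slice_def
    by (intro sum_mono) (fastforce intro: mult_left_le)
  finally show ?thesis
    using lam(2) by simp
qed

lemma ccs_nonempty:
  assumes "is_ccs C"
  shows "C \<noteq> {}"
proof -
  obtain n :: nat and lam S where
    "n \<ge> 1" "\<forall>i<n. 0 < lam i \<and> lam i \<le> 1 \<and> is_slice (S i)" "(\<Sum>i<n. lam i) = 1" and
    C: "C = {(\<Sum>i<n. lam i *\<^sub>R z i) | z. \<forall>i<n. z i \<in> S i}"
    by (rule is_ccsE[OF assms])
  then have S: "\<forall>i<n. is_slice (S i)"
    by blast
  have "\<forall>i. \<exists>a. i < n \<longrightarrow> a \<in> S i"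
    using S unfolding is_slice_def by blast
  then obtain z where "\<forall>i<n. z i \<in> S i"
    by metis
  then show ?thesis
    using C by blast
qed

lemma norm_diff_ccs_le_2:
  fixes C :: "'a::real_normed_vector set"
  assumes "norm z \<le> 1" "is_ccs C" "w \<in> C"
  shows "norm (z - w) \<le> 2"
  using norm_triangle_ineq4[of z w] norm_le_one_of_mem_ccs[OF assms(2,3)] assms(1)
  by linarith

lemma bdd_above_norm_diff_ccs:
  fixes C :: "'a::real_normed_vector set"
  assumes "norm z \<le> 1" "is_ccs C"
  shows "bdd_above ((\<lambda>w. norm (z - w)) ` C)"
  using norm_diff_ccs_le_2[OF assms] by (auto simp: bdd_above_def)

lemma linf_fst_sum: "linf_fst (\<Sum>i\<in>A. p i) = (\<Sum>i\<in>A. linf_fst (p i))"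
  by (induction A rule: infinite_finite_induct) (auto simp: zero_linf_def plus_linf_def)

lemma linf_fst_scaleR: "linf_fst (r *\<^sub>R p) = r *\<^sub>R linf_fst p"
  by (simp add: scaleR_linf_def)

lemma linf_fst_diff: "linf_fst (p - q) = linf_fst p - linf_fst q"
  by (simp add: minus_linf_def)

lemma norm_linf_fst_le: "norm (linf_fst p) \<le> norm p"
  by (simp add: norm_linf_def)

lemma bounded_linear_LInf_left: "bounded_linear (\<lambda>a. LInf a (0::'b::real_normed_vector))"
  by (rule bounded_linear_intro[where K=1]) (auto simp: plus_linf_def scaleR_linf_def norm_LInf)

lemma bounded_linear_LInf_right: "bounded_linear (\<lambda>b. LInf (0::'a::real_normed_vector) b)"
  by (rule bounded_linear_intro[where K=1]) (auto simp: plus_linf_def scaleR_linf_def norm_LInf)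

lemma linear_LInf_split:
  assumes "linear F"
  shows "F (LInf a b) = F (LInf a 0) + F (LInf 0 b)"
proof -
  have "LInf a b = LInf a 0 + LInf 0 b"
    by (simp add: plus_linf_def)
  then show ?thesis
    by (metis assms linear_add)
qed

lemma onorm_linf_le:
  fixes F :: "('a::real_normed_vector, 'b::real_normed_vector) linf \<Rightarrow> 'c::real_normed_vector"
  assumes F: "bounded_linear F"
  shows "onorm F \<le> onorm (\<lambda>a. F (LInf a 0)) + onorm (\<lambda>b. F (LInf 0 b))"
    (is "_ \<le> onorm ?f + onorm ?g")
proof (rule onorm_bound)
  have f: "bounded_linear ?f" and g: "bounded_linear ?g"
    using bounded_linear_compose[OF F] bounded_linear_LInf_left bounded_linear_LInf_right
    by blast+
  show "0 \<le> onorm ?f + onorm ?g"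
    using onorm_pos_le[OF f] onorm_pos_le[OF g] by simp
  fix p :: "('a, 'b) linf"
  obtain a b where p: "p = LInf a b"
    by (cases p)
  have "F p = ?f a + ?g b"
    unfolding p by (rule linear_LInf_split[OF bounded_linear.linear[OF F]])
  then have "norm (F p) \<le> norm (?f a) + norm (?g b)"
    by (simp add: norm_triangle_ineq)
  also have "\<dots> \<le> onorm ?f * norm a + onorm ?g * norm b"
    using onorm[OF f] onorm[OF g] by (rule add_mono)
  also have "\<dots> \<le> onorm ?f * norm p + onorm ?g * norm p"
    using onorm_pos_le[OF f] onorm_pos_le[OF g]
    by (intro add_mono mult_left_mono) (auto simp: p norm_LInf)
  finally show "norm (F p) \<le> (onorm ?f + onorm ?g) * norm p"
    by (simp add: algebra_simps)
qed

lemma slice_linf_contains_slice_times_point: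
  fixes S :: "('a::real_normed_vector, 'b::real_normed_vector) linf set"
  assumes "is_slice S"
  obtains T b where "is_slice T" "norm b \<le> 1" "\<And>a. a \<in> T \<Longrightarrow> LInf a b \<in> S"
proof -
  obtain F \<delta> where F: "bounded_linear F" and \<delta>: "\<delta> > 0" and S: "S = slice F \<delta>"
    using assms unfolding is_slice_def by blast
  define f where "f a = F (LInf a 0)" for a
  define g where "g b = F (LInf 0 b)" for b
  have f: "bounded_linear f" and g: "bounded_linear g"
    unfolding f_def g_def
    using bounded_linear_compose[OF F] bounded_linear_LInf_left bounded_linear_LInf_right
    by blast+
  define T where "T = slice f (\<delta> / 2)"
  obtain b where b: "b \<in> slice g (\<delta> / 2)"
    using slice_nonempty[OF g] \<delta> by (metis ex_in_conv half_gt_zero)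
  have "is_slice T"
    unfolding is_slice_def T_def using f \<delta> slice_nonempty[OF f] by (metis half_gt_zero)
  moreover have "norm b \<le> 1"
    using b by (simp add: slice_def)
  moreover have "LInf a b \<in> S" if a: "a \<in> T" for a
  proof -
    have "F (LInf a b) = f a + g b"
      unfolding f_def g_def by (rule linear_LInf_split[OF bounded_linear.linear[OF F]])
    moreover have "onorm F \<le> onorm f + onorm g"
      unfolding f_def g_def by (rule onorm_linf_le[OF F])
    ultimately show ?thesis
      using a b unfolding S T_def slice_def by (simp add: norm_LInf)
  qed
  ultimately show ?thesis
    using that by blast
qed

lemma ccs_linf_fst_image_contains_ccs:
  fixes C :: "('a::real_normed_vector, 'b::real_normed_vector) linf set"
  assumes "is_ccs C"
  obtains C' where "is_ccs C'" "C' \<subseteq> linf_fst ` C"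
proof -
  obtain n :: nat and lam S where
    n: "n \<ge> 1" and lam: "\<forall>i<n. 0 < lam i \<and> lam i \<le> 1 \<and> is_slice (S i)" "(\<Sum>i<n. lam i) = 1"
    and C: "C = {(\<Sum>i<n. lam i *\<^sub>R z i) | z. \<forall>i<n. z i \<in> S i}"
    by (rule is_ccsE[OF assms])
  have "\<forall>i<n. \<exists>T b. is_slice T \<and> norm b \<le> 1 \<and> (\<forall>a\<in>T. LInf a b \<in> S i)"
    using lam(1) slice_linf_contains_slice_times_point by metis
  then obtain T b where
    T: "\<And>i. i < n \<Longrightarrow> is_slice (T i)" and
    b: "\<And>i a. i < n \<Longrightarrow> a \<in> T i \<Longrightarrow> LInf a (b i) \<in> S i"
    by metis
  define C' where "C' = {(\<Sum>i<n. lam i *\<^sub>R a i) | a. \<forall>i<n. a i \<in> T i}"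
  have "is_ccs C'"
    unfolding is_ccs_def C'_def using n lam T by blast
  moreover have "C' \<subseteq> linf_fst ` C"
  proof
    fix w' assume "w' \<in> C'"
    then obtain a where a: "\<forall>i<n. a i \<in> T i" and w': "w' = (\<Sum>i<n. lam i *\<^sub>R a i)"
      unfolding C'_def by blast
    define w where "w = (\<Sum>i<n. lam i *\<^sub>R LInf (a i) (b i))"
    have "w \<in> C"
      unfolding C w_def using a b by (intro CollectI exI[of _ "\<lambda>i. LInf (a i) (b i)"]) auto
    moreover have "w' = linf_fst w"
      unfolding w' w_def by (simp add: linf_fst_sum linf_fst_scaleR)
    ultimately show "w' \<in> linf_fst ` C"
      by blast
  qed
  ultimately show ?thesis
    using that by blast
qed

theorem mainTheorem9:
  fixes x :: "'a::banach" and y :: "'b::banach"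
  assumes "ccs_daugavet_point x"
    and "norm y \<le> 1"
  shows "ccs_daugavet_point (LInf x y)"
proof -
  have x: "norm x = 1" and daugavet: "\<And>C. is_ccs C \<Longrightarrow> (SUP w\<in>C. norm (x - w)) = 2"
    using assms(1) unfolding ccs_daugavet_point_def by auto
  have xy: "norm (LInf x y) = 1"
    using x assms(2) by (simp add: norm_LInf)
  have "(SUP w\<in>C. norm (LInf x y - w)) = 2" if C: "is_ccs C" for C :: "('a, 'b) linf set"
  proof (rule antisym)
    show "(SUP w\<in>C. norm (LInf x y - w)) \<le> 2"
      using xy by (intro cSUP_least ccs_nonempty[OF C] norm_diff_ccs_le_2[OF _ C]) auto
    obtain C' where C': "is_ccs C'" "C' \<subseteq> linf_fst ` C"
      using ccs_linf_fst_image_contains_ccs[OF C] .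
    have "\<exists>w\<in>C. norm (x - w') \<le> norm (LInf x y - w)" if "w' \<in> C'" for w'
      using that C'(2) norm_linf_fst_le[of "LInf x y - _"] by (force simp: linf_fst_diff)
    then have "(SUP w'\<in>C'. norm (x - w')) \<le> (SUP w\<in>C. norm (LInf x y - w))"
      using ccs_nonempty[OF C'(1)] bdd_above_norm_diff_ccs[OF _ C] xy by (intro cSUP_mono) auto
    then show "2 \<le> (SUP w\<in>C. norm (LInf x y - w))"
      using daugavet[OF C'(1)] by simp
  qed
  then show ?thesis
    using xy unfolding ccs_daugavet_point_def by blast
qed

end
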